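(* Let $g(t)$, $t\in[0,T)$, be the Ricci flow solution on $S^1\times S^3$ of the form $g(t)=\phi^2dz^2+a^2\omega^1\otimes\omega^1+b^2\omega^2\otimes\omega^2+c^2\omega^3\otimes\omega^3$ starting from initial data with $0<a\le b\le c$, and suppose the flow becomes singular at a finite time $T$ with $\check a(T)=0$, where $\check a(t)=\min_s a(s,t)$. Then $T\ge \frac{\check a(0)^2}{4}$.
   Context: $S^3=SU(2)$ carries a global left-invariant frame $E_1,E_2,E_3$ with $[E_i,E_j]=-2\epsilon_{ijk}E_k$ and dual coframe $\omega^i$; $z\in S^1=[0,2\pi)$, $\phi,a,b,c$ positive smooth $2\pi$-periodic functions; $s$ is the arclength coordinate $ds=\phi\,dz$. The Ricci flow $\partial_tg=-2\mathrm{Ric}(g)$ preserves this form. *)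

theory Defs
  imports "HOL-Analysis.Analysis"
begin

text \<open>Functions of (z,t), with z the S^1 coordinate (2pi-periodic in z) and t time.\<close>

text \<open>Smoothness (C-infinity) of a function of two real variables on a set S:
  f lies in a family of functions closed under taking the two partial derivatives,
  each member being (Frechet) differentiable at every point of S (within S).\<close>
definition smooth2_on :: "(real \<times> real) set \<Rightarrow> (real \<times> real \<Rightarrow> real) \<Rightarrow> bool" where
  "smooth2_on S f \<longleftrightarrow>
     (\<exists>F. f \<in> F \<and> (\<forall>g\<in>F. \<exists>gz gt. gz \<in> F \<and> gt \<in> F \<and>
        (\<forall>p\<in>S. (g has_derivative (\<lambda>(h,k). gz p * h + gt p * k)) (at p within S))))"

definition dz :: "(real \<times> real \<Rightarrow> real) \<Rightarrow> real \<times> real \<Rightarrow> real" where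
  "dz f p = deriv (\<lambda>y. f (y, snd p)) (fst p)"

definition dt :: "(real \<times> real \<Rightarrow> real) \<Rightarrow> real \<times> real \<Rightarrow> real" where
  "dt f p = deriv (\<lambda>s. f (fst p, s)) (snd p)"

text \<open>Derivative with respect to arclength s, ds = phi dz.\<close>
definition ds :: "(real \<times> real \<Rightarrow> real) \<Rightarrow> (real \<times> real \<Rightarrow> real) \<Rightarrow> real \<times> real \<Rightarrow> real" where
  "ds \<phi> f p = dz f p / \<phi> p"

text \<open>Ricci flow of g = phi^2 dz^2 + a^2 w1^2 + b^2 w2^2 + c^2 w3^2 on S^1 x S^3,
  with [E_i,E_j] = -2 eps_ijk E_k, written as the PDE system for phi,a,b,c
  (partial_t at fixed z; all z-derivatives expressed through s).\<close>
definition ricci_flow_S1S3 ::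
  "real \<Rightarrow> (real \<times> real \<Rightarrow> real) \<Rightarrow> (real \<times> real \<Rightarrow> real) \<Rightarrow> (real \<times> real \<Rightarrow> real)
     \<Rightarrow> (real \<times> real \<Rightarrow> real) \<Rightarrow> bool" where
  "ricci_flow_S1S3 T \<phi> a b c \<longleftrightarrow>
     0 < T \<and>
     (\<forall>f\<in>{\<phi>, a, b, c}.
        smooth2_on (UNIV \<times> {0..<T}) f \<and>
        (\<forall>z t. 0 \<le> t \<and> t < T \<longrightarrow> f (z + 2*pi, t) = f (z, t) \<and> 0 < f (z, t))) \<and>
     (\<forall>z t. 0 < t \<and> t < T \<longrightarrow>
        (let p = (z, t);
             A = a p; B = b p; C = c p;
             As = ds \<phi> a p; Bs = ds \<phi> b p; Cs = ds \<phi> c p;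
             Ass = ds \<phi> (ds \<phi> a) p; Bss = ds \<phi> (ds \<phi> b) p; Css = ds \<phi> (ds \<phi> c) p
         in dt a p = Ass + As * (Bs / B + Cs / C) - 2 * (A^4 - (B^2 - C^2)^2) / (A * B^2 * C^2)
          \<and> dt b p = Bss + Bs * (As / A + Cs / C) - 2 * (B^4 - (A^2 - C^2)^2) / (A^2 * B * C^2)
          \<and> dt c p = Css + Cs * (As / A + Bs / B) - 2 * (C^4 - (A^2 - B^2)^2) / (A^2 * B^2 * C)
          \<and> dt \<phi> p = \<phi> p * (Ass / A + Bss / B + Css / C)))"

definition amin :: "(real \<times> real \<Rightarrow> real) \<Rightarrow> real \<Rightarrow> real" where
  "amin a t = (INF z\<in>{0..2*pi}. a (z, t))"

end

theory Submission
  imports Defs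
begin

(* Let u = min(a, b, c). At a spatial minimum of u, the radius f realising it has ds f = 0 and
   ds ds f >= 0, and because f is the smallest of the three radii its reaction term is at least
   -2/f; so there d/dt f^2 >= -4. Hence the barrier w = u^2 + (4 + e) t + e - m^2, with
   m = check-a(0), cannot reach zero: at its first zero, d/dt f^2 would have to be at most -(4 + e).
   Letting e -> 0 gives check-a(t)^2 >= u^2 >= m^2 - 4t, and check-a(t) -> 0 as t -> T forces
   m^2 <= 4T. The ordering a <= b <= c is used only at t = 0, where it makes u = a. *)

lemma smooth2_onE:
  assumes "smooth2_on S f"
  obtains fz ft where "smooth2_on S fz" "smooth2_on S ft"
    "\<And>p. p \<in> S \<Longrightarrow> (f has_derivative (\<lambda>(h, k). fz p * h + ft p * k)) (at p within S)"
proof -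
  obtain F where F: "f \<in> F" "\<forall>g\<in>F. \<exists>gz gt. gz \<in> F \<and> gt \<in> F \<and>
      (\<forall>p\<in>S. (g has_derivative (\<lambda>(h, k). gz p * h + gt p * k)) (at p within S))"
    using assms unfolding smooth2_on_def by blast
  then obtain fz ft where "fz \<in> F" "ft \<in> F"
      "\<forall>p\<in>S. (f has_derivative (\<lambda>(h, k). fz p * h + ft p * k)) (at p within S)"
    by blast
  moreover from this F have "smooth2_on S fz" "smooth2_on S ft"
    unfolding smooth2_on_def by blast+
  ultimately show thesis using that by blast
qed

lemma smooth2_on_continuous_on: "smooth2_on S f \<Longrightarrow> continuous_on S f"
  by (erule smooth2_onE) (auto simp: continuous_on_eq_continuous_within intro: has_derivative_continuous)

lemma smooth2_on_subset:
  assumes "smooth2_on S f" "S' \<subseteq> S"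
  shows "smooth2_on S' f"
proof -
  obtain F where F: "f \<in> F" "\<forall>g\<in>F. \<exists>gz gt. gz \<in> F \<and> gt \<in> F \<and>
      (\<forall>p\<in>S. (g has_derivative (\<lambda>(h, k). gz p * h + gt p * k)) (at p within S))"
    using assms(1) unfolding smooth2_on_def by blast
  have "\<forall>g\<in>F. \<exists>gz gt. gz \<in> F \<and> gt \<in> F \<and>
      (\<forall>p\<in>S'. (g has_derivative (\<lambda>(h, k). gz p * h + gt p * k)) (at p within S'))"
  proof
    fix g assume "g \<in> F"
    then obtain gz gt where "gz \<in> F" "gt \<in> F"
        "\<forall>p\<in>S. (g has_derivative (\<lambda>(h, k). gz p * h + gt p * k)) (at p within S)"
      using F(2) by blast
    with assms(2) show "\<exists>gz gt. gz \<in> F \<and> gt \<in> F \<and>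
        (\<forall>p\<in>S'. (g has_derivative (\<lambda>(h, k). gz p * h + gt p * k)) (at p within S'))"
      by (blast intro: has_derivative_subset)
  qed
  with F(1) show ?thesis unfolding smooth2_on_def by blast
qed

lemma smooth2_on_cong:
  assumes "smooth2_on S f" "\<And>p. p \<in> S \<Longrightarrow> g p = f p"
  shows "smooth2_on S g"
proof -
  obtain F where F: "f \<in> F" "\<forall>h\<in>F. \<exists>hz ht. hz \<in> F \<and> ht \<in> F \<and>
      (\<forall>p\<in>S. (h has_derivative (\<lambda>(u, v). hz p * u + ht p * v)) (at p within S))"
    using assms(1) unfolding smooth2_on_def by blast
  then obtain fz ft where "fz \<in> F" "ft \<in> F"
      "\<forall>p\<in>S. (f has_derivative (\<lambda>(u, v). fz p * u + ft p * v)) (at p within S)"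
    by blast
  with assms(2) have "\<forall>p\<in>S. (g has_derivative (\<lambda>(u, v). fz p * u + ft p * v)) (at p within S)"
    by (blast intro: has_derivative_transform)
  with F \<open>fz \<in> F\<close> \<open>ft \<in> F\<close> have "\<forall>h\<in>insert g F. \<exists>hz ht. hz \<in> insert g F \<and> ht \<in> insert g F \<and>
      (\<forall>p\<in>S. (h has_derivative (\<lambda>(u, v). hz p * u + ht p * v)) (at p within S))"
    by blast
  then show ?thesis unfolding smooth2_on_def by blast
qed

lemma has_derivative_imp_partial_derivatives:
  fixes f :: "real \<times> real \<Rightarrow> real"
  assumes "(f has_derivative (\<lambda>(h, k). A * h + B * k)) (at (z, t))"
  shows "((\<lambda>y. f (y, t)) has_real_derivative A) (at z)" "dz f (z, t) = A"
    and "((\<lambda>s. f (z, s)) has_real_derivative B) (at t)" "dt f (z, t) = B"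
proof -
  have "((\<lambda>y. (y, t)) has_derivative (\<lambda>h. (h, 0))) (at z)"
    by (intro derivative_intros)
  from has_derivative_compose[OF this assms]
  show "((\<lambda>y. f (y, t)) has_real_derivative A) (at z)"
    by (simp add: has_field_derivative_def mult_commute_abs)
  then show "dz f (z, t) = A"
    unfolding dz_def by (simp add: DERIV_imp_deriv)
  have "((\<lambda>s. (z, s)) has_derivative (\<lambda>k. (0, k))) (at t)"
    by (intro derivative_intros)
  from has_derivative_compose[OF this assms]
  show "((\<lambda>s. f (z, s)) has_real_derivative B) (at t)"
    by (simp add: has_field_derivative_def mult_commute_abs)
  then show "dt f (z, t) = B"
    unfolding dt_def by (simp add: DERIV_imp_deriv)
qed

lemma smooth2_on_openE:
  assumes "smooth2_on S f" "open S"
  obtains fz ft where "smooth2_on S fz" "smooth2_on S ft"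
    "\<And>p. p \<in> S \<Longrightarrow> (f has_derivative (\<lambda>(h, k). fz p * h + ft p * k)) (at p)"
proof -
  obtain fz ft where fz: "smooth2_on S fz" and ft: "smooth2_on S ft"
      and D: "\<And>p. p \<in> S \<Longrightarrow> (f has_derivative (\<lambda>(h, k). fz p * h + ft p * k)) (at p within S)"
    using smooth2_onE[OF assms(1)] by blast
  show thesis
  proof (rule that[OF fz ft])
    fix p assume "p \<in> S"
    from D[OF this] show "(f has_derivative (\<lambda>(h, k). fz p * h + ft p * k)) (at p)"
      by (simp add: at_within_open[OF \<open>p \<in> S\<close> assms(2)])
  qed
qed

lemma smooth2_on_open_partial_derivatives:
  assumes "smooth2_on S f" "open S" "(z, t) \<in> S"
  shows "((\<lambda>y. f (y, t)) has_real_derivative dz f (z, t)) (at z)"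
    and "((\<lambda>s. f (z, s)) has_real_derivative dt f (z, t)) (at t)"
proof -
  obtain fz ft where "\<And>p. p \<in> S \<Longrightarrow> (f has_derivative (\<lambda>(h, k). fz p * h + ft p * k)) (at p)"
    using smooth2_on_openE[OF assms(1,2)] by blast
  from this[OF assms(3)] show "((\<lambda>y. f (y, t)) has_real_derivative dz f (z, t)) (at z)"
    and "((\<lambda>s. f (z, s)) has_real_derivative dt f (z, t)) (at t)"
    by (simp_all add: has_derivative_imp_partial_derivatives)
qed

lemma smooth2_on_open_dz:
  assumes "smooth2_on S f" "open S"
  shows "smooth2_on S (dz f)"
proof -
  obtain fz ft where "smooth2_on S fz"
      and D: "\<And>p. p \<in> S \<Longrightarrow> (f has_derivative (\<lambda>(h, k). fz p * h + ft p * k)) (at p)"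
    using smooth2_on_openE[OF assms] by blast
  moreover have "dz f p = fz p" if "p \<in> S" for p
    using D[OF that] has_derivative_imp_partial_derivatives(2) by (cases p) simp
  ultimately show ?thesis by (blast intro: smooth2_on_cong)
qed

lemma DERIV_second_nonneg_at_min:
  fixes \<psi> \<psi>' :: "real \<Rightarrow> real"
  assumes D: "\<And>y. (\<psi> has_real_derivative \<psi>' y) (at y)"
    and D2: "(\<psi>' has_real_derivative d) (at x)"
    and is_min: "\<And>y. \<psi> x \<le> \<psi> y"
  shows "0 \<le> d"
proof (rule ccontr)
  assume "\<not> 0 \<le> d"
  then obtain \<delta> where "\<delta> > 0" and dec: "\<And>h. 0 < h \<Longrightarrow> h < \<delta> \<Longrightarrow> \<psi>' (x + h) < \<psi>' x"
    using DERIV_neg_dec_right[OF D2] by force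
  have "\<psi>' x = 0"
    using DERIV_local_min[OF D zero_less_one] is_min by blast
  obtain \<xi> where \<xi>: "x < \<xi>" "\<xi> < x + \<delta>/2" and mvt: "\<psi> (x + \<delta>/2) - \<psi> x = (\<delta>/2) * \<psi>' \<xi>"
    using MVT2[of x "x + \<delta>/2" \<psi> \<psi>'] D \<open>\<delta> > 0\<close> by auto
  have "\<psi>' \<xi> < 0"
    using dec[of "\<xi> - x"] \<xi> \<open>\<psi>' x = 0\<close> by simp
  with \<open>\<delta> > 0\<close> have "(\<delta>/2) * \<psi>' \<xi> < 0"
    by (simp add: mult_pos_neg)
  then have "\<psi> (x + \<delta>/2) < \<psi> x"
    using mvt by linarith
  with is_min show False by (simp add: not_less[symmetric])
qed

lemma DERIV_nonpos_at_left_min: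
  fixes g :: "real \<Rightarrow> real"
  assumes D: "(g has_real_derivative D) (at x)" and "t0 < x"
    and left_min: "\<And>s. t0 \<le> s \<Longrightarrow> s < x \<Longrightarrow> g x \<le> g s"
  shows "D \<le> 0"
proof (rule ccontr)
  assume "\<not> D \<le> 0"
  then obtain d where "d > 0" and inc: "\<And>h. 0 < h \<Longrightarrow> h < d \<Longrightarrow> g (x - h) < g x"
    using DERIV_pos_inc_left[OF D] by force
  define h where "h = min (d/2) ((x - t0)/2)"
  have "0 < h"
    using \<open>d > 0\<close> \<open>t0 < x\<close> by (simp add: h_def)
  have "h \<le> d/2" "h \<le> (x - t0)/2"
    unfolding h_def by (rule min.cobounded1, rule min.cobounded2)
  have "g (x - h) < g x"
    using inc \<open>0 < h\<close> \<open>h \<le> d/2\<close> \<open>d > 0\<close> by simp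
  moreover have "g x \<le> g (x - h)"
    using left_min \<open>0 < h\<close> \<open>h \<le> (x - t0)/2\<close> by simp
  ultimately show False by simp
qed

lemma periodic_eq_on_period_interval:
  fixes g :: "real \<Rightarrow> 'a"
  assumes per: "\<And>x. g (x + p) = g x" and "0 < p"
  obtains w where "w \<in> {0..p}" "g w = g z"
proof -
  have shift: "g (x + of_int k * p) = g x" for x k
  proof (induction k rule: int_induct[where k = 0])
    case (step1 i)
    then show ?case using per[of "x + of_int i * p"] by (simp add: algebra_simps)
  next
    case (step2 i)
    then show ?case using per[of "x + of_int (i - 1) * p"] by (simp add: algebra_simps)
  qed simp
  define k where "k = \<lfloor>z / p\<rfloor>"
  have "of_int k * p \<le> z" "z < (of_int k + 1) * p"
    using \<open>0 < p\<close> unfolding k_def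
    by (simp_all add: pos_le_divide_eq[symmetric] pos_divide_less_eq[symmetric])
  then have "z - of_int k * p \<in> {0..p}"
    by (simp add: algebra_simps)
  moreover have "g (z - of_int k * p) = g z"
    using shift[of "z - of_int k * p" k] by simp
  ultimately show thesis by (rule that)
qed

lemma continuous_on_nonneg_at_left_limit:
  fixes g :: "real \<Rightarrow> real"
  assumes cont: "continuous_on {a..b} g" and "a < c" "c \<le> b"
    and nonneg: "\<And>s. a \<le> s \<Longrightarrow> s < c \<Longrightarrow> 0 \<le> g s"
  shows "0 \<le> g c"
proof -
  have "closed ({a..b} \<inter> g -` {0..})"
    using cont by (rule continuous_closed_preimage) auto
  moreover have "{a..<c} \<subseteq> {a..b} \<inter> g -` {0..}"
    using nonneg \<open>c \<le> b\<close> by auto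
  ultimately have "closure {a..<c} \<subseteq> {a..b} \<inter> g -` {0..}"
    by (rule closure_minimal[rotated])
  moreover have "c \<in> closure {a..<c}"
    using \<open>a < c\<close> by simp
  ultimately show ?thesis
    by auto
qed

lemma first_hitting_time:
  fixes w :: "'a::metric_space \<times> real \<Rightarrow> real"
  assumes "compact K" "0 \<le> t" and cont: "continuous_on (K \<times> {0..t}) w"
    and "z0 \<in> K" "w (z0, t) \<le> 0" and init: "\<And>z. z \<in> K \<Longrightarrow> 0 < w (z, 0)"
  obtains z1 t1 where "z1 \<in> K" "0 < t1" "t1 \<le> t" "w (z1, t1) \<le> 0"
    "\<And>z. z \<in> K \<Longrightarrow> 0 \<le> w (z, t1)"
    "\<And>z s. z \<in> K \<Longrightarrow> 0 \<le> s \<Longrightarrow> s < t1 \<Longrightarrow> 0 < w (z, s)"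
proof -
  define F where "F = (K \<times> {0..t}) \<inter> w -` {..0}"
  have "compact (K \<times> {0..t})"
    using \<open>compact K\<close> by (simp add: compact_Times)
  moreover have "closed F"
    unfolding F_def using cont
    by (rule continuous_closed_preimage) (auto intro: compact_imp_closed \<open>compact (K \<times> {0..t})\<close>)
  ultimately have "compact ((K \<times> {0..t}) \<inter> F)"
    by (rule compact_Int_closed)
  then have "compact F"
    unfolding F_def by (simp add: Int_absorb1)
  moreover have "(z0, t) \<in> F"
    unfolding F_def using \<open>z0 \<in> K\<close> \<open>w (z0, t) \<le> 0\<close> \<open>0 \<le> t\<close> by auto
  ultimately have "\<exists>p1\<in>F. \<forall>q\<in>F. snd p1 \<le> snd q"
    by (intro continuous_attains_inf continuous_on_snd continuous_on_id) auto
  then obtain p1 where "p1 \<in> F" and first: "\<And>q. q \<in> F \<Longrightarrow> snd p1 \<le> snd q"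
    by blast
  obtain z1 t1 where p1: "p1 = (z1, t1)" by (cases p1)
  have "z1 \<in> K" "0 \<le> t1" "t1 \<le> t" "w (z1, t1) \<le> 0"
    using \<open>p1 \<in> F\<close> unfolding p1 F_def by auto
  have "t1 \<noteq> 0"
    using init[OF \<open>z1 \<in> K\<close>] \<open>w (z1, t1) \<le> 0\<close> by auto
  with \<open>0 \<le> t1\<close> have "0 < t1" by simp
  have before: "0 < w (z, s)" if "z \<in> K" "0 \<le> s" "s < t1" for z s
  proof (rule ccontr)
    assume "\<not> 0 < w (z, s)"
    then have "(z, s) \<in> F"
      unfolding F_def using that \<open>t1 \<le> t\<close> by auto
    then show False using first[of "(z, s)"] \<open>s < t1\<close> unfolding p1 by simp
  qed
  have at_t1: "0 \<le> w (z, t1)" if "z \<in> K" for z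
  proof (rule continuous_on_nonneg_at_left_limit[where g = "\<lambda>s. w (z, s)"])
    show "continuous_on {0..t} (\<lambda>s. w (z, s))"
      using that by (auto intro!: continuous_on_compose2[OF cont] continuous_intros)
  qed (use less_imp_le[OF before[OF that]] \<open>0 < t1\<close> \<open>t1 \<le> t\<close> in auto)
  show thesis
    using that \<open>z1 \<in> K\<close> \<open>0 < t1\<close> \<open>t1 \<le> t\<close> \<open>w (z1, t1) \<le> 0\<close> at_t1 before by blast
qed

lemma le_power2_INF:
  fixes f :: "'a \<Rightarrow> real"
  assumes "A \<noteq> {}" and nonneg: "\<And>x. x \<in> A \<Longrightarrow> 0 \<le> f x" and le: "\<And>x. x \<in> A \<Longrightarrow> c \<le> f x ^ 2"
  shows "c \<le> (INF x\<in>A. f x) ^ 2"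
proof (cases "c \<le> 0")
  case True
  moreover have "0 \<le> (INF x\<in>A. f x) ^ 2" by simp
  ultimately show ?thesis by linarith
next
  case False
  have "sqrt c \<le> (INF x\<in>A. f x)"
  proof (rule cINF_greatest[OF \<open>A \<noteq> {}\<close>])
    fix x assume "x \<in> A"
    then show "sqrt c \<le> f x"
      using real_sqrt_le_mono[OF le[OF \<open>x \<in> A\<close>]] nonneg[OF \<open>x \<in> A\<close>] by simp
  qed
  then have "sqrt c ^ 2 \<le> (INF x\<in>A. f x) ^ 2"
    by (rule power_mono) (use False in simp)
  moreover have "sqrt c ^ 2 = c"
    using False by simp
  ultimately show ?thesis by simp
qed

lemma ds_at_spatial_min:
  assumes f: "smooth2_on S f" and \<phi>: "smooth2_on S \<phi>" and "open S"
    and line: "\<And>y. (y, t) \<in> S" and is_min: "\<And>y. f (z, t) \<le> f (y, t)" and "0 < \<phi> (z, t)"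
  shows "ds \<phi> f (z, t) = 0" and "0 \<le> ds \<phi> (ds \<phi> f) (z, t)"
proof -
  have Df: "((\<lambda>y. f (y, t)) has_real_derivative dz f (y, t)) (at y)" for y
    using smooth2_on_open_partial_derivatives(1)[OF f \<open>open S\<close> line] .
  have Dfz: "((\<lambda>y. dz f (y, t)) has_real_derivative dz (dz f) (z, t)) (at z)"
    using smooth2_on_open_partial_derivatives(1)[OF smooth2_on_open_dz[OF f \<open>open S\<close>] \<open>open S\<close> line] .
  have D\<phi>: "((\<lambda>y. \<phi> (y, t)) has_real_derivative dz \<phi> (z, t)) (at z)"
    using smooth2_on_open_partial_derivatives(1)[OF \<phi> \<open>open S\<close> line] .
  have fz: "dz f (z, t) = 0"
    using DERIV_local_min[OF Df zero_less_one] is_min by blast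
  then show "ds \<phi> f (z, t) = 0"
    by (simp add: ds_def)
  have "((\<lambda>y. dz f (y, t) / \<phi> (y, t)) has_real_derivative dz (dz f) (z, t) / \<phi> (z, t)) (at z)"
    using DERIV_divide[OF Dfz D\<phi>] fz \<open>0 < \<phi> (z, t)\<close> by (simp add: power2_eq_square)
  then have "dz (ds \<phi> f) (z, t) = dz (dz f) (z, t) / \<phi> (z, t)"
    unfolding dz_def ds_def by (simp add: DERIV_imp_deriv)
  moreover have "0 \<le> dz (dz f) (z, t)"
    using DERIV_second_nonneg_at_min[OF Df Dfz] is_min by blast
  ultimately show "0 \<le> ds \<phi> (ds \<phi> f) (z, t)"
    using \<open>0 < \<phi> (z, t)\<close> by (simp add: ds_def[of \<phi> "ds \<phi> f"])
qed

lemma reaction_term_lower_bound: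
  fixes x y w r :: real
  assumes "0 < x" "x \<le> y" "x \<le> w" "0 \<le> r"
  shows "- 2 / x \<le> - 2 * (x ^ 4 - r) / (x * y\<^sup>2 * w\<^sup>2)"
proof -
  have "x\<^sup>2 \<le> y\<^sup>2" "x\<^sup>2 \<le> w\<^sup>2"
    using assms by (simp_all add: power_mono)
  then have "x\<^sup>2 * x\<^sup>2 \<le> y\<^sup>2 * w\<^sup>2"
    by (rule mult_mono) simp_all
  then have "x ^ 4 - r \<le> y\<^sup>2 * w\<^sup>2"
    using \<open>0 \<le> r\<close> by (simp add: power4_eq_xxxx power2_eq_square)
  moreover have "0 < y" "0 < w"
    using assms by linarith+
  ultimately show ?thesis
    using \<open>0 < x\<close> by (simp add: field_simps)
qed

definition min_abc :: "(real \<times> real \<Rightarrow> real) \<Rightarrow> (real \<times> real \<Rightarrow> real) \<Rightarrow> (real \<times> real \<Rightarrow> real)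
    \<Rightarrow> real \<times> real \<Rightarrow> real" where
  "min_abc a b c p = min (a p) (min (b p) (c p))"

lemma ricci_flow_S1S3_component:
  assumes "ricci_flow_S1S3 T \<phi> a b c" "f \<in> {\<phi>, a, b, c}"
  shows "smooth2_on (UNIV \<times> {0..<T}) f"
    and "0 \<le> t \<Longrightarrow> t < T \<Longrightarrow> f (z + 2 * pi, t) = f (z, t)"
    and "0 \<le> t \<Longrightarrow> t < T \<Longrightarrow> 0 < f (z, t)"
  using assms unfolding ricci_flow_S1S3_def by blast+

lemma ricci_flow_S1S3_smooth_interior:
  assumes "ricci_flow_S1S3 T \<phi> a b c" "f \<in> {\<phi>, a, b, c}"
  shows "smooth2_on (UNIV \<times> {0<..<T}) f"
  using ricci_flow_S1S3_component(1)[OF assms] by (rule smooth2_on_subset) auto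

lemma ricci_flow_S1S3_has_dt:
  assumes "ricci_flow_S1S3 T \<phi> a b c" "f \<in> {\<phi>, a, b, c}" "0 < t" "t < T"
  shows "((\<lambda>s. f (z, s)) has_real_derivative dt f (z, t)) (at t)"
  by (rule smooth2_on_open_partial_derivatives(2)[OF ricci_flow_S1S3_smooth_interior[OF assms(1,2)]])
    (use assms(3,4) in \<open>auto simp: open_Times\<close>)

(* X is the coefficient of the first-order term. *)
lemma ricci_flow_S1S3_min_component:
  assumes flow: "ricci_flow_S1S3 T \<phi> a b c" and "0 < t" "t < T"
  obtains f X where "f \<in> {a, b, c}" "f (z, t) = min_abc a b c (z, t)"
    "ds \<phi> (ds \<phi> f) (z, t) + ds \<phi> f (z, t) * X - 2 / f (z, t) \<le> dt f (z, t)"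
proof -
  let ?p = "(z, t)"
  have pos: "0 < a ?p" "0 < b ?p" "0 < c ?p"
    using ricci_flow_S1S3_component(3)[OF flow] \<open>0 < t\<close> \<open>t < T\<close> by auto
  note pde = flow[unfolded ricci_flow_S1S3_def, THEN conjunct2, THEN conjunct2, rule_format,
      where z = z and t = t, OF conjI[OF \<open>0 < t\<close> \<open>t < T\<close>], unfolded Let_def]
  consider "a ?p \<le> b ?p" "a ?p \<le> c ?p" | "b ?p \<le> a ?p" "b ?p \<le> c ?p" | "c ?p \<le> a ?p" "c ?p \<le> b ?p"
    by linarith
  then show thesis
  proof cases
    case 1
    note reaction = reaction_term_lower_bound[OF pos(1) 1 zero_le_power2[of "b ?p ^ 2 - c ?p ^ 2"]]
    show thesis
      by (rule that[of a "ds \<phi> b ?p / b ?p + ds \<phi> c ?p / c ?p"])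
        (simp, use 1 in \<open>simp add: min_abc_def\<close>, use pde reaction in linarith)
  next
    case 2
    have "b ?p * (a ?p)\<^sup>2 * (c ?p)\<^sup>2 = (a ?p)\<^sup>2 * b ?p * (c ?p)\<^sup>2"
      by (simp add: algebra_simps)
    note reaction = reaction_term_lower_bound[OF pos(2) 2 zero_le_power2[of "a ?p ^ 2 - c ?p ^ 2"],
        unfolded this]
    show thesis
      by (rule that[of b "ds \<phi> a ?p / a ?p + ds \<phi> c ?p / c ?p"])
        (simp, use 2 in \<open>simp add: min_abc_def\<close>, use pde reaction in linarith)
  next
    case 3
    have "c ?p * (a ?p)\<^sup>2 * (b ?p)\<^sup>2 = (a ?p)\<^sup>2 * (b ?p)\<^sup>2 * c ?p"
      by (simp add: algebra_simps)
    note reaction = reaction_term_lower_bound[OF pos(3) 3 zero_le_power2[of "a ?p ^ 2 - b ?p ^ 2"],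
        unfolded this]
    show thesis
      by (rule that[of c "ds \<phi> a ?p / a ?p + ds \<phi> b ?p / b ?p"])
        (simp, use 3 in \<open>simp add: min_abc_def\<close>, use pde reaction in linarith)
  qed
qed

lemma ricci_flow_S1S3_min_abc_pos:
  assumes "ricci_flow_S1S3 T \<phi> a b c" "0 \<le> t" "t < T"
  shows "0 < min_abc a b c (z, t)"
  using ricci_flow_S1S3_component(3)[OF assms(1) _ assms(2,3)] by (simp add: min_abc_def)

lemma ricci_flow_S1S3_min_abc_continuous_on:
  assumes "ricci_flow_S1S3 T \<phi> a b c"
  shows "continuous_on (UNIV \<times> {0..<T}) (min_abc a b c)"
  unfolding min_abc_def[abs_def]
  using ricci_flow_S1S3_component(1)[OF assms]
  by (intro continuous_on_min smooth2_on_continuous_on) auto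

lemma ricci_flow_S1S3_min_abc_periodic:
  assumes "ricci_flow_S1S3 T \<phi> a b c" "0 \<le> t" "t < T"
  shows "min_abc a b c (z + 2 * pi, t) = min_abc a b c (z, t)"
proof -
  have "f (z + 2 * pi, t) = f (z, t)" if "f \<in> {a, b, c}" for f
    using ricci_flow_S1S3_component(2)[OF assms(1) _ assms(2,3)] that by blast
  from this[of a] this[of b] this[of c] show ?thesis
    by (simp add: min_abc_def)
qed

lemma ricci_flow_S1S3_min_abc_min_on_period:
  assumes flow: "ricci_flow_S1S3 T \<phi> a b c" and "0 \<le> t" "t < T"
    and is_min: "\<And>y. y \<in> {0..2 * pi} \<Longrightarrow> min_abc a b c (z, t) \<le> min_abc a b c (y, t)"
  shows "min_abc a b c (z, t) \<le> min_abc a b c (y, t)"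
proof -
  obtain y' where y': "y' \<in> {0..2 * pi}" "min_abc a b c (y', t) = min_abc a b c (y, t)"
    using periodic_eq_on_period_interval[of "\<lambda>x. min_abc a b c (x, t)" "2 * pi"]
      ricci_flow_S1S3_min_abc_periodic[OF flow \<open>0 \<le> t\<close> \<open>t < T\<close>] by auto
  from is_min[OF y'(1)] y'(2) show ?thesis by simp
qed

lemma ricci_flow_S1S3_min_abc_at_spatial_min:
  assumes flow: "ricci_flow_S1S3 T \<phi> a b c" and "0 < t" "t < T"
    and is_min: "\<And>y. y \<in> {0..2 * pi} \<Longrightarrow> min_abc a b c (z, t) \<le> min_abc a b c (y, t)"
  obtains f where "f \<in> {a, b, c}" "f (z, t) = min_abc a b c (z, t)" "- 2 \<le> f (z, t) * dt f (z, t)"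
proof -
  obtain f X where f: "f \<in> {a, b, c}" "f (z, t) = min_abc a b c (z, t)"
    and pde: "ds \<phi> (ds \<phi> f) (z, t) + ds \<phi> f (z, t) * X - 2 / f (z, t) \<le> dt f (z, t)"
    using ricci_flow_S1S3_min_component[OF flow \<open>0 < t\<close> \<open>t < T\<close>] by blast
  have "open (UNIV \<times> {0<..<T})"
    by (simp add: open_Times)
  have smooth_f: "smooth2_on (UNIV \<times> {0<..<T}) f" and smooth_\<phi>: "smooth2_on (UNIV \<times> {0<..<T}) \<phi>"
    using f(1) by (auto intro: ricci_flow_S1S3_smooth_interior[OF flow])
  have "f (z, t) \<le> f (y, t)" for y
    using ricci_flow_S1S3_min_abc_min_on_period[OF flow less_imp_le[OF \<open>0 < t\<close>] \<open>t < T\<close> is_min, of y] f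
    unfolding min_abc_def by auto
  moreover have "0 < \<phi> (z, t)" "0 < f (z, t)"
    using ricci_flow_S1S3_component(3)[OF flow] f(1) \<open>0 < t\<close> \<open>t < T\<close> by auto
  ultimately have "ds \<phi> f (z, t) = 0" "0 \<le> ds \<phi> (ds \<phi> f) (z, t)"
    using ds_at_spatial_min[OF smooth_f smooth_\<phi> \<open>open (UNIV \<times> {0<..<T})\<close>] \<open>0 < t\<close> \<open>t < T\<close>
    by auto
  with pde have "- 2 / f (z, t) \<le> dt f (z, t)"
    by simp
  then have "- 2 / f (z, t) * f (z, t) \<le> dt f (z, t) * f (z, t)"
    using \<open>0 < f (z, t)\<close> by (intro mult_right_mono) auto
  with \<open>0 < f (z, t)\<close> have "- 2 \<le> f (z, t) * dt f (z, t)"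
    by (simp add: mult.commute)
  with f show thesis by (rule that)
qed

lemma ricci_flow_S1S3_min_abc_barrier:
  assumes flow: "ricci_flow_S1S3 T \<phi> a b c" and "0 < e" "0 \<le> m"
    and init: "\<And>z. z \<in> {0..2 * pi} \<Longrightarrow> m \<le> min_abc a b c (z, 0)"
    and "0 \<le> t" "t < T" "z \<in> {0..2 * pi}"
  shows "m\<^sup>2 - (4 + e) * t - e < (min_abc a b c (z, t))\<^sup>2"
proof (rule ccontr)
  define u where "u = min_abc a b c"
  define w where "w p = (u p)\<^sup>2 + (4 + e) * snd p + e - m\<^sup>2" for p
  assume "\<not> ?thesis"
  then have "w (z, t) \<le> 0"
    by (simp add: w_def u_def)
  have "continuous_on ({0..2 * pi} \<times> {0..t}) u"
    unfolding u_def using \<open>t < T\<close>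
    by (intro continuous_on_subset[OF ricci_flow_S1S3_min_abc_continuous_on[OF flow]]) auto
  then have cont: "continuous_on ({0..2 * pi} \<times> {0..t}) w"
    unfolding w_def by (intro continuous_intros)
  have w_init: "0 < w (y, 0)" if "y \<in> {0..2 * pi}" for y
    using power_mono[OF init[OF that] \<open>0 \<le> m\<close>, of 2] \<open>0 < e\<close> by (simp add: w_def u_def)
  obtain z1 t1 where "z1 \<in> {0..2 * pi}" "0 < t1" "t1 \<le> t" "w (z1, t1) \<le> 0"
      and at_t1: "\<And>y. y \<in> {0..2 * pi} \<Longrightarrow> 0 \<le> w (y, t1)"
      and before: "\<And>y s. y \<in> {0..2 * pi} \<Longrightarrow> 0 \<le> s \<Longrightarrow> s < t1 \<Longrightarrow> 0 < w (y, s)"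
    using first_hitting_time[OF compact_Icc \<open>0 \<le> t\<close> cont \<open>z \<in> {0..2 * pi}\<close> \<open>w (z, t) \<le> 0\<close> w_init]
    by blast
  have "t1 < T"
    using \<open>t1 \<le> t\<close> \<open>t < T\<close> by simp
  have min_on_period: "u (z1, t1) \<le> u (y, t1)" if "y \<in> {0..2 * pi}" for y
  proof (rule power2_le_imp_le)
    show "(u (z1, t1))\<^sup>2 \<le> (u (y, t1))\<^sup>2"
      using \<open>w (z1, t1) \<le> 0\<close> at_t1[OF that] by (simp add: w_def)
    show "0 \<le> u (y, t1)"
      using ricci_flow_S1S3_min_abc_pos[OF flow] \<open>0 < t1\<close> \<open>t1 < T\<close> by (simp add: u_def less_imp_le)
  qed
  obtain f where f: "f \<in> {a, b, c}" "f (z1, t1) = u (z1, t1)"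
    and reaction: "- 2 \<le> f (z1, t1) * dt f (z1, t1)"
    using ricci_flow_S1S3_min_abc_at_spatial_min[OF flow \<open>0 < t1\<close> \<open>t1 < T\<close> min_on_period[unfolded u_def]]
    unfolding u_def by blast
  define g where "g s = (f (z1, s))\<^sup>2 + (4 + e) * s" for s
  have "((\<lambda>s. f (z1, s)) has_real_derivative dt f (z1, t1)) (at t1)"
    using f(1) \<open>0 < t1\<close> \<open>t1 < T\<close> by (intro ricci_flow_S1S3_has_dt[OF flow]) auto
  then have "(g has_real_derivative 2 * f (z1, t1) * dt f (z1, t1) + (4 + e)) (at t1)"
    unfolding g_def by (auto intro!: derivative_eq_intros)
  moreover have "g t1 \<le> g s" if "0 \<le> s" "s < t1" for s
  proof -
    have "0 < u (z1, s)" "u (z1, s) \<le> f (z1, s)"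
      using ricci_flow_S1S3_min_abc_pos[OF flow] that \<open>t1 < T\<close> f(1) by (auto simp: u_def min_abc_def)
    then have "(u (z1, s))\<^sup>2 \<le> (f (z1, s))\<^sup>2"
      by (simp add: power_mono)
    then show ?thesis
      using before[OF \<open>z1 \<in> {0..2 * pi}\<close> that] \<open>w (z1, t1) \<le> 0\<close> f(2) by (simp add: g_def w_def)
  qed
  ultimately have "2 * f (z1, t1) * dt f (z1, t1) + (4 + e) \<le> 0"
    using \<open>0 < t1\<close> by (intro DERIV_nonpos_at_left_min[of g _ t1 0]) auto
  with reaction \<open>0 < e\<close> show False
    by simp
qed

lemma ricci_flow_S1S3_min_abc_lower_bound:
  assumes flow: "ricci_flow_S1S3 T \<phi> a b c" and "0 \<le> m"
    and init: "\<And>z. z \<in> {0..2 * pi} \<Longrightarrow> m \<le> min_abc a b c (z, 0)"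
    and "0 \<le> t" "t < T" "z \<in> {0..2 * pi}"
  shows "m\<^sup>2 - 4 * t \<le> (min_abc a b c (z, t))\<^sup>2"
proof (rule field_le_epsilon)
  fix e :: real
  assume "0 < e"
  define q where "q = e / (t + 1)"
  have "0 < q"
    unfolding q_def using \<open>0 < e\<close> \<open>0 \<le> t\<close> by simp
  from ricci_flow_S1S3_min_abc_barrier[OF flow this \<open>0 \<le> m\<close> init \<open>0 \<le> t\<close> \<open>t < T\<close> \<open>z \<in> {0..2 * pi}\<close>]
  have "m\<^sup>2 - (4 + q) * t - q < (min_abc a b c (z, t))\<^sup>2" .
  moreover have "(4 + q) * t + q = 4 * t + q * (t + 1)"
    by (simp add: algebra_simps)
  moreover have "q * (t + 1) = e"
    unfolding q_def using \<open>0 \<le> t\<close> by simp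
  ultimately show "m\<^sup>2 - 4 * t \<le> (min_abc a b c (z, t))\<^sup>2 + e"
    by linarith
qed

lemma ricci_flow_S1S3_amin_lower_bound:
  assumes flow: "ricci_flow_S1S3 T \<phi> a b c"
    and init: "\<And>z. a (z, 0) \<le> b (z, 0) \<and> b (z, 0) \<le> c (z, 0)"
    and "0 \<le> t" "t < T"
  shows "(amin a 0)\<^sup>2 - 4 * t \<le> (amin a t)\<^sup>2"
proof -
  have a_pos: "0 < a (z, s)" if "0 \<le> s" "s < T" for z s
    using ricci_flow_S1S3_component(3)[OF flow _ that] by simp
  have "bdd_below ((\<lambda>z. a (z, 0)) ` {0..2 * pi})"
    using a_pos \<open>t < T\<close> \<open>0 \<le> t\<close> by (intro bdd_belowI2[of _ 0]) (simp add: less_imp_le)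
  then have a0: "amin a 0 \<le> min_abc a b c (z, 0)" if "z \<in> {0..2 * pi}" for z
    using cINF_lower[OF _ that] init[of z] unfolding amin_def min_abc_def by simp
  have "0 \<le> amin a 0"
    unfolding amin_def using a_pos \<open>t < T\<close> \<open>0 \<le> t\<close>
    by (intro cINF_greatest) (auto simp: less_imp_le)
  show ?thesis
    unfolding amin_def[of a t]
  proof (rule le_power2_INF)
    fix z :: real assume "z \<in> {0..2 * pi}"
    have "(amin a 0)\<^sup>2 - 4 * t \<le> (min_abc a b c (z, t))\<^sup>2"
      using ricci_flow_S1S3_min_abc_lower_bound[OF flow \<open>0 \<le> amin a 0\<close> a0] \<open>z \<in> {0..2 * pi}\<close>
        \<open>0 \<le> t\<close> \<open>t < T\<close> by blast
    also have "\<dots> \<le> (a (z, t))\<^sup>2"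
      using ricci_flow_S1S3_min_abc_pos[OF flow \<open>0 \<le> t\<close> \<open>t < T\<close>, of z]
      by (intro power_mono) (auto simp: min_abc_def)
    finally show "(amin a 0)\<^sup>2 - 4 * t \<le> (a (z, t))\<^sup>2" .
  qed (use a_pos \<open>0 \<le> t\<close> \<open>t < T\<close> in \<open>auto simp: less_imp_le\<close>)
qed

theorem corollary4p2:
  fixes T :: real and \<phi> a b c :: "real \<times> real \<Rightarrow> real"
  assumes flow: "ricci_flow_S1S3 T \<phi> a b c"
    and init: "\<And>z. a (z, 0) \<le> b (z, 0) \<and> b (z, 0) \<le> c (z, 0)"
    and sing: "((\<lambda>t. amin a t) \<longlongrightarrow> 0) (at_left T)"
  shows "T \<ge> (amin a 0)^2 / 4"
proof -
  have "0 < T"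
    using flow unfolding ricci_flow_S1S3_def by blast
  have "\<forall>\<^sub>F t in at_left T. (amin a 0)\<^sup>2 - 4 * t \<le> (amin a t)\<^sup>2"
    using eventually_at_left_real[OF \<open>0 < T\<close>]
    by eventually_elim (auto intro: ricci_flow_S1S3_amin_lower_bound[OF flow init])
  with sing have "(amin a 0)\<^sup>2 - 4 * T \<le> 0\<^sup>2"
    by (intro tendsto_le[OF trivial_limit_at_left_real]) (auto intro!: tendsto_intros)
  then show ?thesis by simp
qed

end
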